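(* Let $\omega\in\mathbb{R}^d$ be rationally independent, let $B\in\mathcal{M}(n,\mathbb{C})$ be in Jordan normal form with spectrum $\sigma(B)=\{\alpha_1,\dots,\alpha_l\}$ ($\alpha_i$ distinct), written as $B=\mathrm{diag}(B_1,\dots,B_l)$ where $B_i$ collects the Jordan blocks of eigenvalue $\alpha_i$, and let $U:\mathbb{T}^d\to Gl(n,\mathbb{C})$ be continuous with $\partial_\omega U=BU-U\bar B$. Write $U=(U_i^j)_{i,j=1,\dots,l}$ in the corresponding block decomposition and $\mathcal{M}=\{2i\pi\langle k,\omega\rangle:k\in\mathbb{Z}^d\}$. Then: (1) if $\alpha_i-\bar\alpha_j\notin\mathcal{M}$, the block $U_i^j$ is identically zero; in particular, if for some $j$ one has $\alpha_i-\bar\alpha_j\notin\mathcal{M}$ for all $i$, then $\det U=0$; (2) if $\alpha_i-\bar\alpha_j=2i\pi\langle k_{i,j},\omega\rangle$ for some $k_{i,j}\in\mathbb{Z}^d\setminus\{0\}$, then the only possibly nonzero Fourier coefficient of $U_i^j$ is the one indexed by $k_{i,j}$.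
   Context: $\mathbb{T}^d=\mathbb{R}^d/\mathbb{Z}^d$; $\omega$ rationally independent means $\langle k,\omega\rangle\ne0$ for $k\ne0$. $\partial_\omega U(\theta)=\frac{d}{dt}U(\theta+t\omega)|_{t=0}$ (assumed to exist). $\bar B$ is the entrywise complex conjugate. Fourier coefficients: $\hat U(k)=\int_{\mathbb{T}^d}U(\theta)e^{-2i\pi\langle k,\theta\rangle}d\theta$. *)

theory Defs
  imports "HOL-Analysis.Analysis"
begin

text \<open>Square complex matrices of size n are represented as functions
  nat \<Rightarrow> nat \<Rightarrow> complex, of which only the entries with indices below n matter.
  Points of the torus are points of real^'d, and functions on the torus are
  functions on real^'d that are 1-periodic in each coordinate.\<close>

definition mat_mult :: "nat \<Rightarrow> (nat \<Rightarrow> nat \<Rightarrow> complex) \<Rightarrow> (nat \<Rightarrow> nat \<Rightarrow> complex) \<Rightarrow> nat \<Rightarrow> nat \<Rightarrow> complex" where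
  "mat_mult n A C = (\<lambda>r s. \<Sum>m<n. A r m * C m s)"

definition mat_cnj :: "(nat \<Rightarrow> nat \<Rightarrow> complex) \<Rightarrow> nat \<Rightarrow> nat \<Rightarrow> complex" where
  "mat_cnj A = (\<lambda>r s. cnj (A r s))"

definition mat_det :: "nat \<Rightarrow> (nat \<Rightarrow> nat \<Rightarrow> complex) \<Rightarrow> complex" where
  "mat_det n A = (\<Sum>p \<in> {p. p permutes {..<n}}. of_int (sign p) * (\<Prod>i<n. A i (p i)))"

text \<open>Jordan matrix given by a list of Jordan blocks (size, eigenvalue), placed
  along the diagonal in the order of the list.\<close>

definition block_start :: "(nat \<times> complex) list \<Rightarrow> nat \<Rightarrow> nat" where
  "block_start bs k = sum_list (map fst (take k bs))"

definition in_block :: "(nat \<times> complex) list \<Rightarrow> nat \<Rightarrow> nat \<Rightarrow> bool" where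
  "in_block bs k r \<longleftrightarrow> block_start bs k \<le> r \<and> r < block_start bs (Suc k)"

definition jordan_mat :: "(nat \<times> complex) list \<Rightarrow> nat \<Rightarrow> nat \<Rightarrow> complex" where
  "jordan_mat bs = (\<lambda>r s. \<Sum>k<length bs.
     if in_block bs k r \<and> in_block bs k s then
       (if r = s then snd (bs ! k) else if s = Suc r then 1 else 0)
     else 0)"

text \<open>B (of size n) is in Jordan normal form given by the block list bs, with all
  blocks of the same eigenvalue consecutive (so B = diag(B_1,...,B_l)).\<close>

definition jordan_nf_grouped :: "nat \<Rightarrow> (nat \<Rightarrow> nat \<Rightarrow> complex) \<Rightarrow> (nat \<times> complex) list \<Rightarrow> bool" where
  "jordan_nf_grouped n B bs \<longleftrightarrow>
     (\<forall>b \<in> set bs. 0 < fst b) \<and> n = sum_list (map fst bs) \<and>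
     (\<forall>i j k. i \<le> j \<and> j \<le> k \<and> k < length bs \<and> snd (bs ! i) = snd (bs ! k)
          \<longrightarrow> snd (bs ! j) = snd (bs ! i)) \<and>
     (\<forall>r s. r < n \<and> s < n \<longrightarrow> B r s = jordan_mat bs r s)"

definition jordan_spectrum :: "(nat \<times> complex) list \<Rightarrow> complex set" where
  "jordan_spectrum bs = snd ` set bs"

definition int_inner :: "('d::finite \<Rightarrow> int) \<Rightarrow> real^'d \<Rightarrow> real" where
  "int_inner k \<omega> = (\<Sum>i\<in>UNIV. real_of_int (k i) * \<omega> $ i)"

definition rationally_independent :: "real^'d::finite \<Rightarrow> bool" where
  "rationally_independent \<omega> \<longleftrightarrow> (\<forall>k. (\<exists>i. k i \<noteq> 0) \<longrightarrow> int_inner k \<omega> \<noteq> 0)"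

definition resonances :: "real^'d::finite \<Rightarrow> complex set" where
  "resonances \<omega> = {2 * pi * \<i> * complex_of_real (int_inner k \<omega>) | k. True}"

definition torus_periodic :: "(real^'d::finite \<Rightarrow> 'a) \<Rightarrow> bool" where
  "torus_periodic f \<longleftrightarrow> (\<forall>\<theta> i. f (\<theta> + axis i 1) = f \<theta>)"

definition fourier_coeff :: "(real^'d::finite \<Rightarrow> complex) \<Rightarrow> ('d \<Rightarrow> int) \<Rightarrow> complex" where
  "fourier_coeff f k = integral (cbox 0 One)
     (\<lambda>\<theta>. f \<theta> * exp (- 2 * pi * \<i> * complex_of_real (int_inner k \<theta>)))"

end

theory Submission
  imports Defs
begin

(*
  Integrating the flow derivative of U times exp(-2 pi i <k, theta>) over the torus gives zero,
  because translation leaves the integral of a periodic function unchanged. So the equation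
  d_omega U = B U - U conj(B) becomes the Sylvester equation
  2 pi i <k, omega> C = B C - C conj(B) for the matrix C of k-th Fourier coefficients.
  B is upper bidiagonal, and its superdiagonal only links equal eigenvalues. An induction over
  the entries then gives C_rs = 0 unless B_rr - conj(B_ss) = 2 pi i <k, omega>. Rational
  independence makes k |-> 2 pi i <k, omega> injective, which gives (2). If the difference is not
  a resonance, every Fourier coefficient of U_rs vanishes, so U_rs = 0: a continuous function on
  the torus is determined by its Fourier coefficients, by Stone-Weierstrass applied through the
  embedding of the torus into R^2d. A zero block column then forces det U = 0.
*)

section \<open>Periodic functions on the torus\<close>

(* The simplifier rewrites One $ i into this sum. *)
lemma sum_Basis_cart_nth [simp]: "(\<Sum>x\<in>(Basis :: (real^'d) set). x $ i) = 1"
  using inner_sum_Basis[of "axis i (1::real)"] cart_eq_inner_axis[of "One::real^'d" i]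
  by simp

lemma sum_axis_nth: "(\<Sum>i\<in>UNIV. (x $ i) *\<^sub>R axis i (1::real)) = x"
  by (simp add: vec_eq_iff axis_def if_distrib cong: if_cong)

lemma integrable_continuous_UNIV:
  fixes f :: "'a::euclidean_space \<Rightarrow> 'b::banach"
  shows "continuous_on UNIV f \<Longrightarrow> f integrable_on cbox a b"
  by (auto intro: integrable_continuous continuous_on_subset)

lemma torus_periodic_add_int_axis:
  assumes "torus_periodic f"
  shows "f (\<theta> + of_int m *\<^sub>R axis i 1) = f \<theta>"
proof (induction m arbitrary: \<theta> rule: int_induct[of _ 0])
  case (step1 m)
  have "f (\<theta> + of_int (m + 1) *\<^sub>R axis i 1) = f ((\<theta> + of_int m *\<^sub>R axis i 1) + axis i 1)"
    by (simp add: algebra_simps)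
  with assms step1 show ?case
    unfolding torus_periodic_def by simp
next
  case (step2 m)
  have "\<theta> + of_int m *\<^sub>R axis i 1 = (\<theta> + of_int (m - 1) *\<^sub>R axis i 1) + axis i 1"
    by (simp add: algebra_simps)
  with assms step2 show ?case
    unfolding torus_periodic_def by metis
qed simp

lemma torus_periodic_add_Ints:
  assumes "torus_periodic f" "\<And>i. v $ i \<in> \<int>"
  shows "f (\<theta> + v) = f \<theta>"
proof -
  have "f (\<theta> + (\<Sum>i\<in>I. (v $ i) *\<^sub>R axis i 1)) = f \<theta>" if "finite I" for I
    using that
  proof (induction I)
    case (insert j I)
    obtain m where m: "v $ j = of_int m"
      using assms(2) Ints_cases by metis
    have "f (\<theta> + (\<Sum>i\<in>insert j I. (v $ i) *\<^sub>R axis i 1))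
        = f ((\<theta> + (\<Sum>i\<in>I. (v $ i) *\<^sub>R axis i 1)) + of_int m *\<^sub>R axis j 1)"
      using insert.hyps m by (simp add: ac_simps)
    also have "\<dots> = f (\<theta> + (\<Sum>i\<in>I. (v $ i) *\<^sub>R axis i 1))"
      by (rule torus_periodic_add_int_axis[OF assms(1)])
    finally show ?case
      using insert.IH by simp
  qed simp
  from this[of UNIV] show ?thesis
    by (simp add: sum_axis_nth)
qed

lemma torus_periodic_reduce:
  fixes \<theta> :: "real^'d"
  assumes "torus_periodic f"
  obtains \<theta>' where "\<theta>' \<in> cbox 0 One" "f \<theta> = f \<theta>'"
proof
  let ?v = "\<chi> i. of_int \<lfloor>\<theta> $ i\<rfloor> :: real^'d"
  show "\<theta> - ?v \<in> cbox 0 One"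
  proof (unfold mem_box_cart, intro allI conjI)
    fix i
    have "0 \<le> \<theta> $ i - of_int \<lfloor>\<theta> $ i\<rfloor>" "\<theta> $ i - of_int \<lfloor>\<theta> $ i\<rfloor> \<le> 1"
      using of_int_floor_le[of "\<theta> $ i"] real_of_int_floor_add_one_gt[of "\<theta> $ i"] by linarith+
    then show "0 $ i \<le> (\<theta> - ?v) $ i" "(\<theta> - ?v) $ i \<le> One $ i"
      by simp_all
  qed
  show "f \<theta> = f (\<theta> - ?v)"
    using torus_periodic_add_Ints[OF assms, of ?v "\<theta> - ?v"] by simp
qed

lemma integral_unit_cube_split:
  fixes h :: "real^'d \<Rightarrow> 'b::banach"
  assumes "h integrable_on cbox 0 One" "0 \<le> c" "c \<le> 1"
  shows "integral (cbox 0 One) h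
    = integral (cbox 0 (One - c *\<^sub>R axis i 1)) h + integral (cbox ((1 - c) *\<^sub>R axis i 1) One) h"
proof -
  have "axis i 1 \<in> (Basis :: (real^'d) set)"
    by (auto simp: Basis_vec_def)
  moreover have "(\<chi> j. if j = i then min ((One :: real^'d) $ i) (1 - c) else One $ j) = One - c *\<^sub>R axis i 1"
    "(\<chi> j. if j = i then max ((0 :: real^'d) $ i) (1 - c) else 0 $ j) = (1 - c) *\<^sub>R axis i 1"
    using assms(2,3) by (auto simp: vec_eq_iff axis_def)
  then have "cbox 0 One \<inter> {x::real^'d. x \<bullet> axis i 1 \<le> 1 - c} = cbox 0 (One - c *\<^sub>R axis i 1)"
    "cbox 0 One \<inter> {x::real^'d. 1 - c \<le> x \<bullet> axis i 1} = cbox ((1 - c) *\<^sub>R axis i 1) (One :: real^'d)"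
    using interval_split_cart[where a=0 and b=One and k=i and c="1 - c"]
    by (simp_all add: cart_eq_inner_axis interval_cbox_cart)
  ultimately show ?thesis
    using integral_split[OF assms(1), of "axis i 1" "1 - c"] by simp
qed

(* The shift by s moves the part of the cube below x_i = 1 - s onto the part above x_i = s;
   the rest lands one period too high, and periodicity moves it onto the part below x_i = s. *)
lemma integral_torus_translate_axis_unit:
  fixes g :: "real^'d \<Rightarrow> 'b::banach"
  assumes cont: "continuous_on UNIV g" and per: "torus_periodic g" and s: "0 \<le> s" "s \<le> 1"
  shows "integral (cbox 0 One) (\<lambda>\<theta>. g (\<theta> + s *\<^sub>R axis i 1)) = integral (cbox 0 One) g"
proof -
  let ?e = "axis i 1 :: real^'d"
  have shifted: "g (\<theta> + s *\<^sub>R ?e) = g (\<theta> + (s - 1) *\<^sub>R ?e)" for \<theta>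
    using torus_periodic_add_int_axis[OF per, of "\<theta> + (s - 1) *\<^sub>R ?e" 1 i] by (simp add: algebra_simps)
  have "integral (cbox 0 One) (\<lambda>\<theta>. g (\<theta> + s *\<^sub>R ?e))
      = integral (cbox 0 (One - s *\<^sub>R ?e)) (\<lambda>\<theta>. g (\<theta> + s *\<^sub>R ?e))
        + integral (cbox ((1 - s) *\<^sub>R ?e) One) (\<lambda>\<theta>. g (\<theta> + s *\<^sub>R ?e))"
    by (rule integral_unit_cube_split)
      (use s in \<open>auto intro!: integrable_continuous_UNIV continuous_on_compose2[OF cont] continuous_intros\<close>)
  also have "\<dots> = integral (cbox 0 (One - s *\<^sub>R ?e)) (\<lambda>\<theta>. g (\<theta> + s *\<^sub>R ?e))
        + integral (cbox ((1 - s) *\<^sub>R ?e) One) (\<lambda>\<theta>. g (\<theta> + (s - 1) *\<^sub>R ?e))"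
    by (simp only: shifted)
  also have "\<dots> = integral (cbox (s *\<^sub>R ?e) One) g + integral (cbox 0 (One - (1 - s) *\<^sub>R ?e)) g"
    using integral_shift_cbox[where a="s *\<^sub>R ?e" and b=One and c="s *\<^sub>R ?e" and f=g]
      integral_shift_cbox[where a=0 and b="One - (1 - s) *\<^sub>R ?e" and c="(s - 1) *\<^sub>R ?e" and f=g]
    by (simp add: algebra_simps)
  also have "\<dots> = integral (cbox 0 One) g"
    using integral_unit_cube_split[OF integrable_continuous_UNIV[OF cont], of "1 - s" i] s by simp
  finally show ?thesis .
qed

lemma integral_torus_translate_axis:
  fixes g :: "real^'d \<Rightarrow> 'b::banach"
  assumes cont: "continuous_on UNIV g" and per: "torus_periodic g"
  shows "integral (cbox 0 One) (\<lambda>\<theta>. g (\<theta> + s *\<^sub>R axis i 1)) = integral (cbox 0 One) g"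
proof -
  let ?r = "s - of_int \<lfloor>s\<rfloor>"
  have "g (\<theta> + s *\<^sub>R axis i 1) = g ((\<theta> + ?r *\<^sub>R axis i 1) + of_int \<lfloor>s\<rfloor> *\<^sub>R axis i 1)" for \<theta>
    by (simp add: algebra_simps)
  then have "g (\<theta> + s *\<^sub>R axis i 1) = g (\<theta> + ?r *\<^sub>R axis i 1)" for \<theta>
    using torus_periodic_add_int_axis[OF per] by simp
  moreover have "0 \<le> ?r" "?r \<le> 1"
    using of_int_floor_le[of s] real_of_int_floor_add_one_gt[of s] by linarith+
  ultimately show ?thesis
    using integral_torus_translate_axis_unit[OF cont per] by simp
qed

lemma integral_torus_translate:
  fixes g :: "real^'d \<Rightarrow> 'b::banach"
  assumes "continuous_on UNIV g" "torus_periodic g"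
  shows "integral (cbox 0 One) (\<lambda>\<theta>. g (\<theta> + x)) = integral (cbox 0 One) g"
proof -
  have "integral (cbox 0 One) (\<lambda>\<theta>. g (\<theta> + (\<Sum>i\<in>I. (x $ i) *\<^sub>R axis i 1))) = integral (cbox 0 One) g"
    if "finite I" for I
    using that assms
  proof (induction I arbitrary: g)
    case (insert j I)
    let ?h = "\<lambda>\<theta>. g (\<theta> + (x $ j) *\<^sub>R axis j 1)"
    have "continuous_on UNIV ?h"
      by (rule continuous_on_compose2[OF insert.prems(1)]) (auto intro!: continuous_intros)
    moreover have "torus_periodic ?h"
      using insert.prems(2) unfolding torus_periodic_def by (metis add.assoc add.commute)
    ultimately have "integral (cbox 0 One) (\<lambda>\<theta>. ?h (\<theta> + (\<Sum>i\<in>I. (x $ i) *\<^sub>R axis i 1)))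
        = integral (cbox 0 One) ?h"
      by (rule insert.IH)
    also have "\<dots> = integral (cbox 0 One) g"
      by (rule integral_torus_translate_axis[OF insert.prems])
    finally show ?case
      using insert.hyps by (simp add: ac_simps)
  qed simp
  from this[of UNIV] show ?thesis
    by (simp add: sum_axis_nth)
qed

section \<open>Fourier coefficients along the flow\<close>

lemma has_vector_derivative_flow:
  fixes g :: "real^'d \<Rightarrow> 'b::real_normed_vector"
  assumes "\<And>\<theta>. ((\<lambda>t. g (\<theta> + t *\<^sub>R \<omega>)) has_vector_derivative D \<theta>) (at 0)"
  shows "((\<lambda>t. g (\<theta> + t *\<^sub>R \<omega>)) has_vector_derivative D (\<theta> + x *\<^sub>R \<omega>)) (at x)"
proof -
  have "((\<lambda>t. g ((\<theta> + x *\<^sub>R \<omega>) + t *\<^sub>R \<omega>)) \<circ> (\<lambda>t. t - x) has_vector_derivative 1 *\<^sub>R D (\<theta> + x *\<^sub>R \<omega>)) (at x)"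
    by (rule vector_diff_chain_at) (use assms in \<open>auto intro!: derivative_eq_intros\<close>)
  moreover have "(\<lambda>t. g ((\<theta> + x *\<^sub>R \<omega>) + t *\<^sub>R \<omega>)) \<circ> (\<lambda>t. t - x) = (\<lambda>t. g (\<theta> + t *\<^sub>R \<omega>))"
    by (auto simp: algebra_simps)
  ultimately show ?thesis
    by simp
qed

(* t |-> integral of g (theta + t omega) is constant by translation invariance, and its
   derivative at 0 is the integral of D by differentiation under the integral sign. *)
lemma integral_flow_derivative_eq_0:
  fixes g D :: "real^'d \<Rightarrow> 'b::banach"
  assumes cont: "continuous_on UNIV g" and per: "torus_periodic g" and cont_D: "continuous_on UNIV D"
    and deriv: "\<And>\<theta>. ((\<lambda>t. g (\<theta> + t *\<^sub>R \<omega>)) has_vector_derivative D \<theta>) (at 0)"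
  shows "integral (cbox 0 One) D = 0"
proof -
  have "((\<lambda>x. integral (cbox 0 One) (\<lambda>\<theta>. g (\<theta> + x *\<^sub>R \<omega>))) has_vector_derivative
      integral (cbox 0 One) (\<lambda>\<theta>. D (\<theta> + 0 *\<^sub>R \<omega>))) (at 0 within UNIV)"
  proof (rule leibniz_rule_vector_derivative)
    show "((\<lambda>x. g (\<theta> + x *\<^sub>R \<omega>)) has_vector_derivative D (\<theta> + x *\<^sub>R \<omega>)) (at x within UNIV)" for x \<theta>
      using has_vector_derivative_flow[OF deriv] by simp
    show "(\<lambda>\<theta>. g (\<theta> + x *\<^sub>R \<omega>)) integrable_on cbox 0 One" for x
      by (rule integrable_continuous, rule continuous_on_compose2[OF cont]) (auto intro!: continuous_intros)
    show "continuous_on (UNIV \<times> cbox 0 One) (\<lambda>(x, \<theta>). D (\<theta> + x *\<^sub>R \<omega>))"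
      unfolding case_prod_beta
      by (rule continuous_on_compose2[OF cont_D]) (auto intro!: continuous_intros)
  qed auto
  moreover have "integral (cbox 0 One) (\<lambda>\<theta>. g (\<theta> + x *\<^sub>R \<omega>)) = integral (cbox 0 One) g" for x
    by (rule integral_torus_translate[OF cont per])
  ultimately have "((\<lambda>x::real. integral (cbox 0 One) g) has_vector_derivative integral (cbox 0 One) D) (at 0)"
    by simp
  then show ?thesis
    using vector_derivative_unique_at has_vector_derivative_const by blast
qed

lemma int_inner_add_right: "int_inner k (x + y) = int_inner k x + int_inner k y"
  unfolding int_inner_def by (simp add: algebra_simps sum.distrib)

lemma int_inner_scaleR_right: "int_inner k (t *\<^sub>R x) = t * int_inner k x"
  unfolding int_inner_def by (simp add: algebra_simps sum_distrib_left)

lemma int_inner_axis: "int_inner k (axis i 1) = of_int (k i)"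
  unfolding int_inner_def axis_def by (simp add: if_distrib cong: if_cong)

lemma continuous_on_int_inner: "continuous_on UNIV (int_inner k)"
  unfolding int_inner_def[abs_def] by (intro continuous_intros)

lemma int_inner_add_left: "int_inner (\<lambda>j. k j + l j) \<theta> = int_inner k \<theta> + int_inner l \<theta>"
  unfolding int_inner_def by (simp add: algebra_simps sum.distrib)

lemma int_inner_unit: "int_inner (\<lambda>j. if j = i then m else 0) \<theta> = of_int m * \<theta> $ i"
proof -
  have "int_inner (\<lambda>j. if j = i then m else 0) \<theta> = (\<Sum>j\<in>UNIV. if j = i then of_int m * \<theta> $ j else 0)"
    unfolding int_inner_def by (intro sum.cong) auto
  then show ?thesis
    by simp
qed

lemma rationally_independent_frequency_inj:
  assumes "rationally_independent \<omega>"
    and "2 * pi * \<i> * complex_of_real (int_inner k \<omega>) = 2 * pi * \<i> * complex_of_real (int_inner l \<omega>)"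
  shows "k = l"
proof (rule ccontr)
  assume "k \<noteq> l"
  then have "\<exists>i. k i - l i \<noteq> 0"
    by auto
  moreover have "int_inner (\<lambda>i. k i - l i) \<omega> = int_inner k \<omega> - int_inner l \<omega>"
    unfolding int_inner_def by (simp add: algebra_simps sum_subtractf)
  ultimately show False
    using assms unfolding rationally_independent_def by auto
qed

definition fourier_kernel :: "('d::finite \<Rightarrow> int) \<Rightarrow> real^'d \<Rightarrow> complex" where
  "fourier_kernel k \<theta> = exp (- 2 * pi * \<i> * complex_of_real (int_inner k \<theta>))"

lemma fourier_coeff_eq_integral_kernel:
  "fourier_coeff f k = integral (cbox 0 One) (\<lambda>\<theta>. f \<theta> * fourier_kernel k \<theta>)"
  unfolding fourier_coeff_def fourier_kernel_def by simp

lemma continuous_on_fourier_kernel: "continuous_on UNIV (fourier_kernel k)"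
  unfolding fourier_kernel_def[abs_def]
  by (intro continuous_intros continuous_on_compose2[OF continuous_on_of_real continuous_on_int_inner]) auto

lemma torus_periodic_fourier_kernel: "torus_periodic (fourier_kernel k)"
  unfolding torus_periodic_def fourier_kernel_def int_inner_add_right int_inner_axis exp_eq
  by (intro allI exI[of _ "- k i" for i]) (simp add: algebra_simps)

lemma fourier_kernel_mult: "fourier_kernel k \<theta> * fourier_kernel l \<theta> = fourier_kernel (\<lambda>j. k j + l j) \<theta>"
  unfolding fourier_kernel_def int_inner_add_left by (simp add: exp_add[symmetric] algebra_simps)

lemma fourier_kernel_unit:
  "fourier_kernel (\<lambda>j. if j = i then m else 0) \<theta> = exp (- of_int m * (\<i> * of_real (2 * pi * \<theta> $ i)))"
  unfolding fourier_kernel_def int_inner_unit by (simp add: algebra_simps)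

lemma fourier_kernel_flow_derivative:
  "((\<lambda>t. fourier_kernel k (\<theta> + t *\<^sub>R \<omega>)) has_vector_derivative
     - 2 * pi * \<i> * complex_of_real (int_inner k \<omega>) * fourier_kernel k \<theta>) (at 0)"
proof -
  let ?c = "- 2 * pi * \<i> * complex_of_real (int_inner k \<omega>)"
  have "fourier_kernel k (\<theta> + t *\<^sub>R \<omega>) = fourier_kernel k \<theta> * exp (of_real t * ?c)" for t
    unfolding fourier_kernel_def int_inner_add_right int_inner_scaleR_right by (simp add: exp_add[symmetric] algebra_simps)
  moreover have "((\<lambda>t. fourier_kernel k \<theta> * exp (of_real t * ?c)) has_vector_derivative
      fourier_kernel k \<theta> * (exp (of_real 0 * ?c) * ?c)) (at 0)"
    by (intro has_vector_derivative_real_field derivative_eq_intros) auto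
  ultimately show ?thesis
    by (simp add: mult.commute)
qed

lemma fourier_coeff_flow_derivative:
  fixes u v :: "real^'d \<Rightarrow> complex"
  assumes cont_u: "continuous_on UNIV u" and per: "torus_periodic u" and cont_v: "continuous_on UNIV v"
    and deriv: "\<And>\<theta>. ((\<lambda>t. u (\<theta> + t *\<^sub>R \<omega>)) has_vector_derivative v \<theta>) (at 0)"
  shows "fourier_coeff v k = 2 * pi * \<i> * complex_of_real (int_inner k \<omega>) * fourier_coeff u k"
proof -
  let ?K = "fourier_kernel k" and ?c = "- 2 * pi * \<i> * complex_of_real (int_inner k \<omega>)"
  have cont_K: "continuous_on UNIV ?K"
    by (rule continuous_on_fourier_kernel)
  have "integral (cbox 0 One) (\<lambda>\<theta>. v \<theta> * ?K \<theta> + u \<theta> * (?c * ?K \<theta>)) = 0"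
  proof (rule integral_flow_derivative_eq_0)
    show "continuous_on UNIV (\<lambda>\<theta>. u \<theta> * ?K \<theta>)"
      "continuous_on UNIV (\<lambda>\<theta>. v \<theta> * ?K \<theta> + u \<theta> * (?c * ?K \<theta>))"
      using cont_u cont_v cont_K by (auto intro!: continuous_intros)
    show "torus_periodic (\<lambda>\<theta>. u \<theta> * ?K \<theta>)"
      using per torus_periodic_fourier_kernel[of k] unfolding torus_periodic_def by simp
    show "((\<lambda>t. u (\<theta> + t *\<^sub>R \<omega>) * ?K (\<theta> + t *\<^sub>R \<omega>)) has_vector_derivative
        v \<theta> * ?K \<theta> + u \<theta> * (?c * ?K \<theta>)) (at 0)" for \<theta>
      using has_vector_derivative_mult[OF deriv fourier_kernel_flow_derivative] by (simp add: add.commute)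
  qed
  moreover have "integral (cbox 0 One) (\<lambda>\<theta>. v \<theta> * ?K \<theta> + u \<theta> * (?c * ?K \<theta>))
      = fourier_coeff v k + ?c * fourier_coeff u k"
    unfolding fourier_coeff_eq_integral_kernel mult.left_commute[of "u _"] integral_mult_right[symmetric]
    using cont_u cont_v cont_K by (intro integral_add integrable_continuous_UNIV continuous_intros)
  ultimately show ?thesis
    by (simp add: eq_neg_iff_add_eq_0)
qed

lemma fourier_coeff_diff:
  assumes "continuous_on UNIV f" "continuous_on UNIV g"
  shows "fourier_coeff (\<lambda>\<theta>. f \<theta> - g \<theta>) k = fourier_coeff f k - fourier_coeff g k"
  unfolding fourier_coeff_eq_integral_kernel left_diff_distrib
  using assms continuous_on_fourier_kernel[of k]
  by (intro integral_diff integrable_continuous_UNIV continuous_intros)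

lemma fourier_coeff_sum:
  assumes "finite I" "\<And>i. i \<in> I \<Longrightarrow> continuous_on UNIV (f i)"
  shows "fourier_coeff (\<lambda>\<theta>. \<Sum>i\<in>I. f i \<theta>) k = (\<Sum>i\<in>I. fourier_coeff (f i) k)"
  unfolding fourier_coeff_eq_integral_kernel sum_distrib_right
  using assms continuous_on_fourier_kernel[of k]
  by (intro integral_sum integrable_continuous_UNIV continuous_intros) auto

lemma fourier_coeff_mult_left: "fourier_coeff (\<lambda>\<theta>. c * f \<theta>) k = c * fourier_coeff f k"
  unfolding fourier_coeff_eq_integral_kernel mult.assoc integral_mult_right ..

lemma fourier_coeff_mult_right: "fourier_coeff (\<lambda>\<theta>. f \<theta> * c) k = fourier_coeff f k * c"
  using fourier_coeff_mult_left[of c f k] by (simp add: mult.commute)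

lemma fourier_coeff_sylvester:
  fixes U :: "real^'d \<Rightarrow> nat \<Rightarrow> nat \<Rightarrow> complex" and k :: "'d \<Rightarrow> int"
  assumes per: "torus_periodic U"
    and cont: "\<And>r s. r < n \<Longrightarrow> s < n \<Longrightarrow> continuous_on UNIV (\<lambda>\<theta>. U \<theta> r s)"
    and eq: "\<And>\<theta> r s. r < n \<Longrightarrow> s < n \<Longrightarrow>
        ((\<lambda>t. U (\<theta> + t *\<^sub>R \<omega>) r s) has_vector_derivative
          (mat_mult n B (U \<theta>) r s - mat_mult n (U \<theta>) (mat_cnj B) r s)) (at 0)"
    and rs: "r < n" "s < n"
  defines "C \<equiv> \<lambda>a b. fourier_coeff (\<lambda>\<theta>. U \<theta> a b) k"
  shows "2 * pi * \<i> * complex_of_real (int_inner k \<omega>) * C r s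
    = mat_mult n B C r s - mat_mult n C (mat_cnj B) r s"
proof -
  have "2 * pi * \<i> * complex_of_real (int_inner k \<omega>) * C r s
      = fourier_coeff (\<lambda>\<theta>. mat_mult n B (U \<theta>) r s - mat_mult n (U \<theta>) (mat_cnj B) r s) k"
    unfolding C_def
  proof (rule fourier_coeff_flow_derivative[symmetric, OF cont[OF rs] _ _ eq[OF rs]])
    show "torus_periodic (\<lambda>\<theta>. U \<theta> r s)"
      using per unfolding torus_periodic_def by simp
    show "continuous_on UNIV (\<lambda>\<theta>. mat_mult n B (U \<theta>) r s - mat_mult n (U \<theta>) (mat_cnj B) r s)"
      unfolding mat_mult_def using rs by (intro continuous_intros cont) auto
  qed
  also have "\<dots> = fourier_coeff (\<lambda>\<theta>. \<Sum>m<n. B r m * U \<theta> m s) k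
      - fourier_coeff (\<lambda>\<theta>. \<Sum>m<n. U \<theta> r m * cnj (B m s)) k"
    unfolding mat_mult_def mat_cnj_def using rs by (intro fourier_coeff_diff continuous_intros cont) auto
  also have "\<dots> = mat_mult n B C r s - mat_mult n C (mat_cnj B) r s"
    unfolding mat_mult_def mat_cnj_def C_def using rs
    by (subst (1 2) fourier_coeff_sum)
      (auto intro!: continuous_intros cont simp: fourier_coeff_mult_left fourier_coeff_mult_right)
  finally show ?thesis .
qed

section \<open>Jordan matrices\<close>

lemma block_start_Suc: "k < length bs \<Longrightarrow> block_start bs (Suc k) = block_start bs k + fst (bs ! k)"
  unfolding block_start_def by (simp add: take_Suc_conv_app_nth)

lemma block_start_mono: "k \<le> k' \<Longrightarrow> block_start bs k \<le> block_start bs k'"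
  unfolding block_start_def by (metis le_Suc_ex take_add map_append sum_list_append le_add1)

lemma in_block_less_length: "in_block bs k r \<Longrightarrow> k < length bs"
  unfolding in_block_def block_start_def by (cases "length bs \<le> k") auto

lemma in_block_unique: "in_block bs k r \<Longrightarrow> in_block bs k' r \<Longrightarrow> k = k'"
  unfolding in_block_def by (metis Suc_leI block_start_mono le_less_trans linorder_neqE_nat not_le)

lemma in_block_exists: "r < sum_list (map fst bs) \<Longrightarrow> \<exists>k. in_block bs k r"
proof (induction bs arbitrary: r)
  case (Cons b bs)
  show ?case
  proof (cases "r < fst b")
    case True
    then have "in_block (b # bs) 0 r"
      by (simp add: in_block_def block_start_def)
    then show ?thesis ..
  next
    case False
    with Cons obtain k where "in_block bs k (r - fst b)"
      by fastforce
    with False have "in_block (b # bs) (Suc k) r"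
      by (auto simp: in_block_def block_start_def)
    then show ?thesis ..
  qed
qed simp

lemma jordan_mat_diag:
  assumes "in_block bs k r"
  shows "jordan_mat bs r r = snd (bs ! k)"
proof -
  have "\<not> in_block bs k' r" if "k' \<noteq> k" for k'
    using in_block_unique[OF assms] that by blast
  then have "jordan_mat bs r r = (\<Sum>k'<length bs. if k' = k then snd (bs ! k') else 0)"
    unfolding jordan_mat_def using assms by (intro sum.cong) auto
  then show ?thesis
    using in_block_less_length[OF assms] by simp
qed

lemma jordan_mat_nonzero:
  assumes "jordan_mat bs r m \<noteq> 0"
  obtains k where "in_block bs k r" "in_block bs k m" "m = r \<or> m = Suc r"
proof -
  obtain k where "(if in_block bs k r \<and> in_block bs k m then
       (if r = m then snd (bs ! k) else if m = Suc r then 1 else 0) else 0) \<noteq> (0::complex)"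
    using sum.not_neutral_contains_not_neutral[OF assms[unfolded jordan_mat_def]] by blast
  then have "in_block bs k r \<and> in_block bs k m \<and> (m = r \<or> m = Suc r)"
    by (auto split: if_split_asm)
  then show ?thesis
    using that by blast
qed

(* The only property of Jordan normal form used in the argument. *)
definition jordan_like :: "nat \<Rightarrow> (nat \<Rightarrow> nat \<Rightarrow> complex) \<Rightarrow> bool" where
  "jordan_like n B \<longleftrightarrow>
     (\<forall>r m. r < n \<and> m < n \<and> B r m \<noteq> 0 \<longrightarrow> m = r \<or> (m = Suc r \<and> B m m = B r r))"

lemma jordan_nf_grouped_jordan_like:
  assumes "jordan_nf_grouped n B bs"
  shows "jordan_like n B"
  unfolding jordan_like_def
proof (intro allI impI, elim conjE)
  fix r m assume r: "r < n" and m: "m < n" and nz: "B r m \<noteq> 0"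
  have B: "B a b = jordan_mat bs a b" if "a < n" "b < n" for a b
    using assms that unfolding jordan_nf_grouped_def by blast
  obtain k where "in_block bs k r" "in_block bs k m" "m = r \<or> m = Suc r"
    using nz by (rule jordan_mat_nonzero[of bs r m, unfolded B[OF r m, symmetric]])
  then show "m = r \<or> (m = Suc r \<and> B m m = B r r)"
    using r m B jordan_mat_diag by metis
qed

lemma jordan_like_superdiag:
  "jordan_like n B \<Longrightarrow> Suc r < n \<Longrightarrow> B r (Suc r) \<noteq> 0 \<Longrightarrow> B (Suc r) (Suc r) = B r r"
  unfolding jordan_like_def by (metis Suc_lessD n_not_Suc_n)

lemma mat_mult_jordan_like_left:
  assumes "jordan_like n B" "r < n"
  shows "mat_mult n B C r s = B r r * C r s + (if Suc r < n then B r (Suc r) * C (Suc r) s else 0)"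
proof -
  have "mat_mult n B C r s
      = (\<Sum>m<n. (if m = r then B r r * C r s else 0) + (if m = Suc r then B r m * C m s else 0))"
    unfolding mat_mult_def using assms unfolding jordan_like_def
    by (intro sum.cong) auto
  then show ?thesis
    using assms(2) by (simp add: sum.distrib)
qed

lemma mat_mult_jordan_like_right:
  assumes "jordan_like n B" "s < n"
  shows "mat_mult n C (mat_cnj B) r s
    = C r s * cnj (B s s) + (if 0 < s then C r (s - 1) * cnj (B (s - 1) s) else 0)"
proof -
  have "mat_mult n C (mat_cnj B) r s
      = (\<Sum>m<n. (if m = s then C r s * cnj (B s s) else 0)
          + (if Suc m = s then C r m * cnj (B m s) else 0))"
    unfolding mat_mult_def mat_cnj_def using assms unfolding jordan_like_def
    by (intro sum.cong) auto
  also have "\<dots> = C r s * cnj (B s s) + (\<Sum>m<n. if m = s - 1 \<and> 0 < s then C r m * cnj (B m s) else 0)"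
    using assms(2) by (simp add: sum.distrib) (intro sum.cong; auto)
  finally show ?thesis
    using assms(2) by (simp add: sum.delta)
qed

(* The off-diagonal terms of (B C) r s and (C conj(B)) r s contain
   C (r + 1) s and C r (s - 1); when the coupling entry of B is nonzero these positions have the
   same pair of diagonal entries as (r, s), so the induction hypothesis kills them. *)
lemma jordan_like_sylvester_eq_0:
  assumes B: "jordan_like n B"
    and sylvester: "\<And>r s. r < n \<Longrightarrow> s < n \<Longrightarrow>
      c * C r s = mat_mult n B C r s - mat_mult n C (mat_cnj B) r s"
  shows "r < n \<Longrightarrow> s < n \<Longrightarrow> B r r - cnj (B s s) \<noteq> c \<Longrightarrow> C r s = 0"
proof (induction "(n - r) + s" arbitrary: r s rule: less_induct)
  case less
  note r = less.prems(1) and s = less.prems(2) and ne = less.prems(3)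
  have below: "(if Suc r < n then B r (Suc r) * C (Suc r) s else 0) = 0"
  proof (cases "Suc r < n \<and> B r (Suc r) \<noteq> 0")
    case True
    then have "B (Suc r) (Suc r) = B r r"
      using jordan_like_superdiag[OF B] by blast
    then have "C (Suc r) s = 0"
      using True s ne by (intro less.hyps) auto
    then show ?thesis
      by simp
  qed auto
  have left: "(if 0 < s then C r (s - 1) * cnj (B (s - 1) s) else 0) = 0"
  proof (cases "0 < s \<and> B (s - 1) s \<noteq> 0")
    case True
    then have "B s s = B (s - 1) (s - 1)"
      using jordan_like_superdiag[OF B, of "s - 1"] s by simp
    then have "C r (s - 1) = 0"
      using True r s ne by (intro less.hyps) auto
    then show ?thesis
      by simp
  qed auto
  have "c * C r s = (B r r - cnj (B s s)) * C r s"
    using sylvester[OF r s] mat_mult_jordan_like_left[OF B r] mat_mult_jordan_like_right[OF B s] below left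
    by (simp add: algebra_simps)
  with ne show ?case
    by (metis mult_cancel_right)
qed

lemma jordan_nf_grouped_diag:
  assumes "jordan_nf_grouped n B bs" "r < n" "in_block bs k r"
  shows "B r r = snd (bs ! k)"
proof -
  have "B r r = jordan_mat bs r r"
    using assms(1,2) unfolding jordan_nf_grouped_def by blast
  also have "\<dots> = snd (bs ! k)"
    by (rule jordan_mat_diag[OF assms(3)])
  finally show ?thesis .
qed

lemma jordan_nf_grouped_diag_in_spectrum:
  assumes "jordan_nf_grouped n B bs" "r < n"
  shows "B r r \<in> jordan_spectrum bs"
proof -
  have "r < sum_list (map fst bs)"
    using assms unfolding jordan_nf_grouped_def by simp
  then obtain k where k: "in_block bs k r"
    using in_block_exists by blast
  with assms in_block_less_length[OF k] show ?thesis
    unfolding jordan_spectrum_def jordan_nf_grouped_diag[OF assms k] by simp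
qed

lemma jordan_nf_grouped_spectrum_diag:
  assumes "jordan_nf_grouped n B bs" "\<beta> \<in> jordan_spectrum bs"
  obtains s where "s < n" "B s s = \<beta>"
proof -
  obtain k where k: "k < length bs" "\<beta> = snd (bs ! k)"
    using assms(2) unfolding jordan_spectrum_def by (auto simp: in_set_conv_nth)
  have n: "n = block_start bs (length bs)" and pos: "0 < fst (bs ! k)"
    using assms(1) k(1) unfolding jordan_nf_grouped_def block_start_def by auto
  have block: "in_block bs k (block_start bs k)"
    unfolding in_block_def using block_start_Suc[OF k(1)] pos by simp
  moreover have less: "block_start bs k < n"
    using block block_start_mono[of "Suc k" "length bs" bs] k(1) n unfolding in_block_def by simp
  ultimately have "B (block_start bs k) (block_start bs k) = \<beta>"
    using jordan_nf_grouped_diag[OF assms(1) less] k(2) by simp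
  with less show ?thesis
    by (rule that)
qed

lemma mat_det_zero_column:
  assumes "s < n" "\<And>r. r < n \<Longrightarrow> A r s = 0"
  shows "mat_det n A = 0"
  unfolding mat_det_def
proof (intro sum.neutral ballI)
  fix p assume "p \<in> {p. p permutes {..<n}}"
  then have p: "p permutes {..<n}"
    by simp
  then have "s \<in> p ` {..<n}"
    using assms(1) by (simp add: permutes_image)
  then obtain r where "r < n" "p r = s"
    by auto
  then have "(\<Prod>i<n. A i (p i)) = 0"
    using assms(2) by (intro prod_zero bexI[of _ r]) auto
  then show "of_int (sign p) * (\<Prod>i<n. A i (p i)) = 0"
    by simp
qed

section \<open>Uniqueness of Fourier coefficients\<close>

inductive trig_poly :: "(real^'d::finite \<Rightarrow> complex) \<Rightarrow> bool" where
  kernel: "trig_poly (fourier_kernel k)"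
| scale: "trig_poly P \<Longrightarrow> trig_poly (\<lambda>\<theta>. c * P \<theta>)"
| add: "trig_poly P \<Longrightarrow> trig_poly Q \<Longrightarrow> trig_poly (\<lambda>\<theta>. P \<theta> + Q \<theta>)"

lemma trig_poly_const: "trig_poly (\<lambda>_ :: real^'d. c)"
proof -
  have "fourier_kernel (\<lambda>_. 0) \<theta> = 1" for \<theta> :: "real^'d"
    by (simp add: fourier_kernel_def int_inner_def)
  with trig_poly.scale[OF trig_poly.kernel, of c "\<lambda>_ :: 'd. 0"] show ?thesis
    by simp
qed

lemma trig_poly_sum: "(\<And>i. i \<in> I \<Longrightarrow> trig_poly (P i)) \<Longrightarrow> trig_poly (\<lambda>\<theta>. \<Sum>i\<in>I. P i \<theta>)"
proof (induction I rule: infinite_finite_induct)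
  case (insert i I)
  then show ?case
    using trig_poly.add[of "P i" "\<lambda>\<theta>. \<Sum>i\<in>I. P i \<theta>"] by simp
qed (simp_all add: trig_poly_const)

lemma trig_poly_mult:
  assumes "trig_poly P" "trig_poly Q"
  shows "trig_poly (\<lambda>\<theta>. P \<theta> * Q \<theta>)"
  using assms(1)
proof induction
  case (kernel k)
  show ?case
    using assms(2)
  proof induction
    case (kernel l)
    then show ?case
      unfolding fourier_kernel_mult by (rule trig_poly.kernel)
  next
    case (scale Q c)
    then show ?case
      using trig_poly.scale[of _ c] by (simp add: mult.left_commute)
  next
    case (add Q1 Q2)
    then show ?case
      using trig_poly.add by (simp add: distrib_left)
  qed
next
  case (scale P c)
  then show ?case
    using trig_poly.scale[of _ c] by (simp add: mult.assoc)
next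
  case (add P1 P2)
  then show ?case
    using trig_poly.add by (simp add: distrib_right)
qed

lemma continuous_on_trig_poly: "trig_poly P \<Longrightarrow> continuous_on UNIV P"
  by (induction rule: trig_poly.induct) (auto intro: continuous_on_fourier_kernel continuous_intros)

lemma integral_mult_trig_poly_eq_0:
  fixes f :: "real^'d \<Rightarrow> complex"
  assumes cont: "continuous_on UNIV f" and coeff: "\<And>k. fourier_coeff f k = 0" and P: "trig_poly P"
  shows "integral (cbox 0 One) (\<lambda>\<theta>. f \<theta> * P \<theta>) = 0"
  using P
proof induction
  case (kernel k)
  then show ?case
    using coeff[of k] by (simp add: fourier_coeff_eq_integral_kernel)
next
  case (scale P c)
  then show ?case
    by (simp add: mult.left_commute[of _ c] integral_mult_right)
next
  case (add P Q)
  have "(\<lambda>\<theta>. f \<theta> * R \<theta>) integrable_on cbox 0 One" if "trig_poly R" for R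
    using cont continuous_on_trig_poly[OF that] by (intro integrable_continuous_UNIV continuous_intros)
  with add show ?case
    by (simp add: distrib_left integral_add)
qed

(* Pulled back along this embedding of the torus as a compact subset of R^2d, polynomials
   become trigonometric polynomials; this is how Stone-Weierstrass reaches periodic functions. *)
definition torus_embedding :: "real^'d \<Rightarrow> (real^'d) \<times> (real^'d)" where
  "torus_embedding \<theta> = ((\<chi> i. cos (2 * pi * \<theta> $ i)), (\<chi> i. sin (2 * pi * \<theta> $ i)))"

lemma trig_poly_cos: "trig_poly (\<lambda>\<theta>. complex_of_real (cos (2 * pi * \<theta> $ i)))"
proof -
  have expand: "(\<lambda>\<theta>. complex_of_real (cos (2 * pi * \<theta> $ i)))
      = (\<lambda>\<theta>. 1 / 2 * fourier_kernel (\<lambda>j. if j = i then - 1 else 0) \<theta>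
        + 1 / 2 * fourier_kernel (\<lambda>j. if j = i then 1 else 0) \<theta>)"
    unfolding fourier_kernel_unit cos_of_real[symmetric] cos_exp_eq by (simp add: field_simps)
  show ?thesis
    unfolding expand by (intro trig_poly.add trig_poly.scale trig_poly.kernel)
qed

lemma trig_poly_sin: "trig_poly (\<lambda>\<theta>. complex_of_real (sin (2 * pi * \<theta> $ i)))"
proof -
  have expand: "(\<lambda>\<theta>. complex_of_real (sin (2 * pi * \<theta> $ i)))
      = (\<lambda>\<theta>. 1 / (2 * \<i>) * fourier_kernel (\<lambda>j. if j = i then - 1 else 0) \<theta>
        + - 1 / (2 * \<i>) * fourier_kernel (\<lambda>j. if j = i then 1 else 0) \<theta>)"
    unfolding fourier_kernel_unit sin_of_real[symmetric] sin_exp_eq by (simp add: field_simps)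
  show ?thesis
    unfolding expand by (intro trig_poly.add trig_poly.scale trig_poly.kernel)
qed

lemma linear_pair_cart_expand:
  fixes f :: "(real^'d) \<times> (real^'d) \<Rightarrow> real"
  assumes "linear f"
  shows "f (a, b) = (\<Sum>i\<in>UNIV. a $ i * f (axis i 1, 0) + b $ i * f (0, axis i 1))"
proof -
  have "(a, b) = (\<Sum>i\<in>UNIV. (a $ i) *\<^sub>R (axis i 1, 0) + (b $ i) *\<^sub>R (0, axis i 1))"
    by (simp add: prod_eq_iff fst_sum snd_sum sum.distrib sum_axis_nth)
  then have "f (a, b) = (\<Sum>i\<in>UNIV. (a $ i) *\<^sub>R f (axis i 1, 0) + (b $ i) *\<^sub>R f (0, axis i 1))"
    by (simp only: linear_sum[OF assms] linear_add[OF assms] linear_scale[OF assms])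
  then show ?thesis
    by simp
qed

lemma trig_poly_real_polynomial_function:
  fixes p :: "(real^'d) \<times> (real^'d) \<Rightarrow> real"
  assumes "real_polynomial_function p"
  shows "trig_poly (\<lambda>\<theta>. complex_of_real (p (torus_embedding \<theta>)))"
  using assms
proof induction
  case (linear f)
  have expand: "(\<lambda>\<theta>. complex_of_real (f (torus_embedding \<theta>)))
      = (\<lambda>\<theta>. \<Sum>i\<in>UNIV. complex_of_real (f (axis i 1, 0)) * complex_of_real (cos (2 * pi * \<theta> $ i))
          + complex_of_real (f (0, axis i 1)) * complex_of_real (sin (2 * pi * \<theta> $ i)))"
  proof
    fix \<theta> :: "real^'d"
    show "complex_of_real (f (torus_embedding \<theta>))
      = (\<Sum>i\<in>UNIV. complex_of_real (f (axis i 1, 0)) * complex_of_real (cos (2 * pi * \<theta> $ i))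
          + complex_of_real (f (0, axis i 1)) * complex_of_real (sin (2 * pi * \<theta> $ i)))"
      using linear_pair_cart_expand[OF bounded_linear.linear[OF linear],
          of "\<chi> i. cos (2 * pi * \<theta> $ i)" "\<chi> i. sin (2 * pi * \<theta> $ i)"]
      unfolding torus_embedding_def by (simp add: mult.commute)
  qed
  show ?case
    unfolding expand by (intro trig_poly_sum trig_poly.add trig_poly.scale trig_poly_cos trig_poly_sin)
next
  case (const c)
  show ?case
    by (rule trig_poly_const)
next
  case (add f g)
  show ?case
    unfolding of_real_add using add.IH by (rule trig_poly.add)
next
  case (mult f g)
  show ?case
    unfolding of_real_mult using mult.IH by (rule trig_poly_mult)
qed

lemma trig_poly_polynomial_function:
  fixes p :: "(real^'d) \<times> (real^'d) \<Rightarrow> complex"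
  assumes "polynomial_function p"
  shows "trig_poly (\<lambda>\<theta>. p (torus_embedding \<theta>))"
proof -
  have "real_polynomial_function (\<lambda>x. Re (p x))" "real_polynomial_function (\<lambda>x. Im (p x))"
    using assms bounded_linear_Re bounded_linear_Im unfolding polynomial_function_def o_def by blast+
  then have "trig_poly (\<lambda>\<theta>. complex_of_real (Re (p (torus_embedding \<theta>)))
      + \<i> * complex_of_real (Im (p (torus_embedding \<theta>))))"
    by (intro trig_poly.add trig_poly.scale trig_poly_real_polynomial_function)
  then show ?thesis
    by (simp add: complex_eq[symmetric])
qed

lemma continuous_on_torus_embedding: "continuous_on UNIV torus_embedding"
  unfolding torus_embedding_def
  by (intro continuous_on_Pair continuous_on_vec_lambda continuous_intros)

lemma torus_embedding_eq_imp_eq: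
  fixes \<theta> \<theta>' :: "real^'d"
  assumes per: "torus_periodic f" and eq: "torus_embedding \<theta> = torus_embedding \<theta>'"
  shows "f \<theta> = f \<theta>'"
proof -
  have "(\<theta> - \<theta>') $ i \<in> \<int>" for i
  proof -
    have "sin (2 * pi * \<theta> $ i) = sin (2 * pi * \<theta>' $ i) \<and> cos (2 * pi * \<theta> $ i) = cos (2 * pi * \<theta>' $ i)"
      using eq unfolding torus_embedding_def prod.inject vec_eq_iff by simp
    then obtain m :: int where "2 * pi * \<theta> $ i = 2 * pi * \<theta>' $ i + 2 * pi * m"
      unfolding sin_cos_eq_iff by blast
    then have "2 * pi * (\<theta> - \<theta>') $ i = 2 * pi * of_int m"
      by (simp add: algebra_simps)
    then show ?thesis
      by simp
  qed
  then show ?thesis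
    using torus_periodic_add_Ints[OF per, of "\<theta> - \<theta>'" \<theta>'] by simp
qed

(* On the compact cube the embedding is a quotient map onto its image, and a periodic f is
   constant on its fibres. *)
lemma torus_periodic_factor_embedding:
  fixes f :: "real^'d \<Rightarrow> 'b::topological_space"
  assumes cont: "continuous_on UNIV f" and per: "torus_periodic f"
  obtains F where "continuous_on (torus_embedding ` cbox 0 One) F"
    "\<And>\<theta>. \<theta> \<in> cbox 0 One \<Longrightarrow> F (torus_embedding \<theta>) = f \<theta>"
proof -
  let ?Q = "cbox (0::real^'d) One"
  define F where "F y = f (SOME \<theta>. \<theta> \<in> ?Q \<and> torus_embedding \<theta> = y)" for y
  have F: "F (torus_embedding \<theta>) = f \<theta>" if "\<theta> \<in> ?Q" for \<theta>
  proof -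
    have "\<exists>\<theta>'. \<theta>' \<in> ?Q \<and> torus_embedding \<theta>' = torus_embedding \<theta>"
      using that by blast
    then have "torus_embedding (SOME \<theta>'. \<theta>' \<in> ?Q \<and> torus_embedding \<theta>' = torus_embedding \<theta>)
        = torus_embedding \<theta>"
      by (rule someI2_ex) blast
    then show ?thesis
      unfolding F_def by (rule torus_embedding_eq_imp_eq[OF per])
  qed
  have "quotient_map (top_of_set ?Q) (top_of_set (torus_embedding ` ?Q)) torus_embedding"
  proof (rule continuous_imp_quotient_map)
    show "continuous_map (top_of_set ?Q) (top_of_set (torus_embedding ` ?Q)) torus_embedding"
      unfolding continuous_map_subtopology_eu
      using continuous_on_subset[OF continuous_on_torus_embedding] by auto
    show "compact_space (top_of_set ?Q)"
      by (rule compact_space_subtopology) (simp add: compactin_euclidean_iff)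
    show "Hausdorff_space (top_of_set (torus_embedding ` ?Q))"
      by (rule Hausdorff_space_subtopology[OF Hausdorff_space_euclidean])
  qed simp
  moreover have "continuous_map (top_of_set ?Q) euclidean (F \<circ> torus_embedding)"
    unfolding continuous_map_iff_continuous
    by (rule continuous_on_eq[OF continuous_on_subset[OF cont]]) (auto simp: F)
  ultimately have "continuous_map (top_of_set (torus_embedding ` ?Q)) euclidean F"
    by (rule continuous_compose_quotient_map)
  then have "continuous_on (torus_embedding ` ?Q) F"
    by simp
  then show ?thesis
    using F by (rule that)
qed

lemma trig_poly_approx:
  fixes g :: "real^'d \<Rightarrow> complex"
  assumes "continuous_on UNIV g" "torus_periodic g" "0 < e"
  obtains P where "trig_poly P" "\<And>\<theta>. \<theta> \<in> cbox 0 One \<Longrightarrow> norm (g \<theta> - P \<theta>) < e"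
proof -
  obtain G where G: "continuous_on (torus_embedding ` cbox 0 One) G"
    "\<And>\<theta>. \<theta> \<in> cbox 0 One \<Longrightarrow> G (torus_embedding \<theta>) = g \<theta>"
    using torus_periodic_factor_embedding[OF assms(1,2)] by blast
  have "compact (torus_embedding ` cbox (0::real^'d) One)"
    by (intro compact_continuous_image continuous_on_subset[OF continuous_on_torus_embedding]) auto
  then obtain p where "polynomial_function p" "\<forall>y\<in>torus_embedding ` cbox 0 One. norm (G y - p y) < e"
    using Stone_Weierstrass_polynomial_function[OF _ G(1) assms(3)] by blast
  with G(2) show ?thesis
    using that[of "\<lambda>\<theta>. p (torus_embedding \<theta>)"] trig_poly_polynomial_function by auto
qed

lemma integral_mult_cnj_eq_0_imp_eq_0:
  fixes f :: "'a::euclidean_space \<Rightarrow> complex"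
  assumes cont: "continuous_on (cbox a b) f" and int: "integral (cbox a b) (\<lambda>x. f x * cnj (f x)) = 0"
    and "box a b \<noteq> {}" "x \<in> cbox a b"
  shows "f x = 0"
proof -
  have "((\<lambda>x. f x * cnj (f x)) has_integral 0) (cbox a b)"
    using int cont by (metis integrable_integral integrable_continuous continuous_on_mult continuous_on_cnj)
  then have "((\<lambda>x. complex_of_real ((norm (f x))\<^sup>2)) has_integral 0) (cbox a b)"
    by (simp only: complex_norm_square)
  from has_integral_linear[OF this bounded_linear_Re]
  have "((\<lambda>x. (norm (f x))\<^sup>2) has_integral 0) (cbox a b)"
    by (simp add: o_def)
  then have "(norm (f x))\<^sup>2 = 0"
    using cont by (intro has_integral_0_cbox_imp_0[OF _ _ _ assms(3,4)]) (auto intro!: continuous_intros)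
  then show ?thesis
    by simp
qed

lemma measure_unit_cube: "measure lborel (cbox 0 (One :: real^'d)) = 1"
  by (simp add: content_cbox_cart mem_box_cart)

lemma norm_integral_mult_cnj_le:
  fixes f P :: "real^'d \<Rightarrow> complex"
  assumes cont: "continuous_on UNIV f" and coeff: "\<And>k. fourier_coeff f k = 0" and P: "trig_poly P"
    and bound: "\<And>\<theta>. \<theta> \<in> cbox 0 One \<Longrightarrow> norm (f \<theta>) \<le> M"
    and approx: "\<And>\<theta>. \<theta> \<in> cbox 0 One \<Longrightarrow> norm (cnj (f \<theta>) - P \<theta>) \<le> e"
    and "0 \<le> M" "0 \<le> e"
  shows "norm (integral (cbox 0 One) (\<lambda>\<theta>. f \<theta> * cnj (f \<theta>))) \<le> M * e"
proof -
  let ?Q = "cbox (0::real^'d) One" and ?g = "\<lambda>\<theta>. f \<theta> * (cnj (f \<theta>) - P \<theta>)"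
  have cont_P: "continuous_on UNIV P"
    by (rule continuous_on_trig_poly[OF P])
  have "integral ?Q (\<lambda>\<theta>. f \<theta> * cnj (f \<theta>)) = integral ?Q ?g + integral ?Q (\<lambda>\<theta>. f \<theta> * P \<theta>)"
    using cont cont_P by (subst integral_add[symmetric]) (auto intro!: integrable_continuous_UNIV continuous_intros simp: algebra_simps)
  also have "integral ?Q (\<lambda>\<theta>. f \<theta> * P \<theta>) = 0"
    by (rule integral_mult_trig_poly_eq_0[OF cont coeff P])
  finally have "integral ?Q (\<lambda>\<theta>. f \<theta> * cnj (f \<theta>)) = integral ?Q ?g"
    by simp
  also have "norm \<dots> \<le> M * e * measure lborel ?Q"
  proof (rule has_integral_bound)
    show "(?g has_integral integral ?Q ?g) ?Q"
      using cont cont_P by (intro integrable_integral integrable_continuous_UNIV continuous_intros)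
    show "norm (?g \<theta>) \<le> M * e" if "\<theta> \<in> ?Q" for \<theta>
      unfolding norm_mult using assms that by (intro mult_mono) auto
  qed (use assms in simp)
  finally show ?thesis
    by (simp add: measure_unit_cube)
qed

(* f is orthogonal to every trigonometric polynomial, and cnj f is a uniform limit of such on
   the cube, so the integral of |f|^2 over the cube vanishes. *)
lemma fourier_coeff_eq_0_imp_eq_0:
  fixes f :: "real^'d \<Rightarrow> complex"
  assumes cont: "continuous_on UNIV f" and per: "torus_periodic f"
    and coeff: "\<And>k. fourier_coeff f k = 0"
  shows "f \<theta> = 0"
proof -
  let ?Q = "cbox (0::real^'d) One"
  have cont_Q: "continuous_on ?Q f"
    using cont continuous_on_subset by blast
  obtain M where M: "0 < M" "\<And>\<theta>. \<theta> \<in> ?Q \<Longrightarrow> norm (f \<theta>) \<le> M"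
    using compact_imp_bounded[OF compact_continuous_image[OF cont_Q compact_cbox]]
    unfolding bounded_pos by auto
  have "continuous_on UNIV (\<lambda>\<theta>. cnj (f \<theta>))" "torus_periodic (\<lambda>\<theta>. cnj (f \<theta>))"
    using cont per unfolding torus_periodic_def by (auto intro: continuous_on_cnj)
  note approx = trig_poly_approx[OF this]
  have "norm (integral ?Q (\<lambda>\<theta>. f \<theta> * cnj (f \<theta>))) \<le> 0 + e" if "0 < e" for e
  proof -
    obtain P where "trig_poly P" "\<And>\<theta>. \<theta> \<in> ?Q \<Longrightarrow> norm (cnj (f \<theta>) - P \<theta>) < e / M"
      using approx M(1) \<open>0 < e\<close> by (metis divide_pos_pos)
    with M that show ?thesis
      using norm_integral_mult_cnj_le[OF cont coeff, of P M "e / M"] by (simp add: less_imp_le)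
  qed
  then have "integral ?Q (\<lambda>\<theta>. f \<theta> * cnj (f \<theta>)) = 0"
    using field_le_epsilon norm_le_zero_iff by blast
  moreover have "box 0 (One :: real^'d) \<noteq> {}"
    by (simp add: box_ne_empty)
  moreover obtain \<theta>' where "\<theta>' \<in> ?Q" "f \<theta> = f \<theta>'"
    by (rule torus_periodic_reduce[OF per])
  ultimately show ?thesis
    using integral_mult_cnj_eq_0_imp_eq_0[OF cont_Q] by metis
qed

theorem lemma1:
  fixes \<omega> :: "real^'d"
    and n :: nat
    and B :: "nat \<Rightarrow> nat \<Rightarrow> complex"
    and bs :: "(nat \<times> complex) list"
    and U :: "real^'d \<Rightarrow> nat \<Rightarrow> nat \<Rightarrow> complex"
  assumes ri: "rationally_independent \<omega>"
    and jnf: "jordan_nf_grouped n B bs"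
    and per: "torus_periodic U"
    and cont: "\<And>r s. r < n \<Longrightarrow> s < n \<Longrightarrow> continuous_on UNIV (\<lambda>\<theta>. U \<theta> r s)"
    and gl: "\<And>\<theta>. mat_det n (U \<theta>) \<noteq> 0"
    and eq: "\<And>\<theta> r s. r < n \<Longrightarrow> s < n \<Longrightarrow>
        ((\<lambda>t. U (\<theta> + t *\<^sub>R \<omega>) r s) has_vector_derivative
          (mat_mult n B (U \<theta>) r s - mat_mult n (U \<theta>) (mat_cnj B) r s)) (at 0)"
  shows
    "(\<forall>\<alpha>\<in>jordan_spectrum bs. \<forall>\<beta>\<in>jordan_spectrum bs. \<alpha> - cnj \<beta> \<notin> resonances \<omega> \<longrightarrow>
        (\<forall>\<theta> r s. r < n \<and> s < n \<and> B r r = \<alpha> \<and> B s s = \<beta> \<longrightarrow> U \<theta> r s = 0))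
     \<and> ((\<exists>\<beta>\<in>jordan_spectrum bs. \<forall>\<alpha>\<in>jordan_spectrum bs. \<alpha> - cnj \<beta> \<notin> resonances \<omega>) \<longrightarrow>
        (\<forall>\<theta>. mat_det n (U \<theta>) = 0))
     \<and> (\<forall>\<alpha>\<in>jordan_spectrum bs. \<forall>\<beta>\<in>jordan_spectrum bs. \<forall>k. (\<exists>i. k i \<noteq> 0) \<and>
          \<alpha> - cnj \<beta> = 2 * pi * \<i> * complex_of_real (int_inner k \<omega>) \<longrightarrow>
        (\<forall>k' r s. k' \<noteq> k \<and> r < n \<and> s < n \<and> B r r = \<alpha> \<and> B s s = \<beta> \<longrightarrow>
           fourier_coeff (\<lambda>\<theta>. U \<theta> r s) k' = 0))"
proof -
  have coeff_0: "fourier_coeff (\<lambda>\<theta>. U \<theta> r s) k = 0"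
    if "r < n" "s < n" "B r r - cnj (B s s) \<noteq> 2 * pi * \<i> * complex_of_real (int_inner k \<omega>)" for k r s
    using jordan_like_sylvester_eq_0[OF jordan_nf_grouped_jordan_like[OF jnf]
        fourier_coeff_sylvester[OF per cont eq] that] .
  have entry_0: "U \<theta> r s = 0" if "r < n" "s < n" "B r r - cnj (B s s) \<notin> resonances \<omega>" for \<theta> r s
    using per coeff_0[OF that(1,2)] that(3) unfolding resonances_def
    by (intro fourier_coeff_eq_0_imp_eq_0[OF cont[OF that(1,2)]]) (auto simp: torus_periodic_def)
  have det_0: "mat_det n (U \<theta>) = 0"
    if "\<beta> \<in> jordan_spectrum bs" "\<forall>\<alpha>\<in>jordan_spectrum bs. \<alpha> - cnj \<beta> \<notin> resonances \<omega>" for \<theta> \<beta>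
    using jordan_nf_grouped_spectrum_diag[OF jnf that(1)] that(2) entry_0 jordan_nf_grouped_diag_in_spectrum[OF jnf]
    by (metis mat_det_zero_column)
  have coeff_0_off_resonance: "fourier_coeff (\<lambda>\<theta>. U \<theta> r s) k' = 0"
    if "B r r - cnj (B s s) = 2 * pi * \<i> * complex_of_real (int_inner k \<omega>)" "k' \<noteq> k" "r < n" "s < n"
    for k k' r s
    using that coeff_0 rationally_independent_frequency_inj[OF ri, of k' k] by metis
  show ?thesis
    using entry_0 det_0 coeff_0_off_resonance by blast
qed

end
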